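(* Let $0\leq k'\leq k$ and $0\leq \ell'\leq \ell$. Set $\mathcal{A}= \mathbb{C}\langle X_1,\ldots,X_k,Y_1,\ldots,Y_{\ell}\rangle$, $\mathcal{A}_1=\mathbb{C}\langle X_1,\ldots,X_k\rangle$, $\mathcal{A}_2=\mathbb{C}\langle Y_1,\ldots,Y_{\ell}\rangle$; let $\mathcal{I}_1$ be the ideal of $\mathcal{A}_1$ generated by $X_1,\ldots,X_{k'}$, $\mathcal{I}_2$ the ideal of $\mathcal{A}_2$ generated by $Y_1,\ldots,Y_{\ell'}$, and $\mathcal{I}$ the ideal of $\mathcal{A}$ generated by $\mathcal{I}_1\cup \mathcal{I}_2$. Let $\tau:\mathcal{A}\to\mathbb{C}$ be a unital linear functional and $\tau':\mathcal{A}\to\mathbb{C}$ a linear functional with $\tau'(1)=0$, such that $\mathcal{I}\subset \ker(\tau)$ and $\mathbb{C}\langle X_{k'+1},\ldots,X_k,Y_{\ell'+1},\ldots,Y_{\ell}\rangle\subset \ker(\tau')$. Assume that $(\mathcal{A}_1,\mathcal{I}\cap \mathcal{A}_1)$ and $(\mathcal{A}_2,\mathcal{I}\cap \mathcal{A}_2)$ are free of type $B$ in $(\mathcal{A},\tau,\mathcal{I},\tau'|_{\mathcal{I}})$. Then $\mathcal{A}_1$ and $\mathcal{A}_2$ are infinitesimally free with respect to $(\tau,\tau')$.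
   Context: Freeness of type $B$: for a unital linear functional $\tau$ on a unital algebra $\mathcal{A}$, an ideal $\mathcal{I}$ and a linear $\tau':\mathcal{I}\to\mathbb{C}$, and unital subalgebras $\mathcal{A}_1,\mathcal{A}_2$ with subspaces $V_h\subset\mathcal{I}\cap\mathcal{A}_h$ stable under two-sided multiplication by $\mathcal{A}_h$, $(\mathcal{A}_1,V_1)$ and $(\mathcal{A}_2,V_2)$ are free of type $B$ if $\mathcal{A}_1,\mathcal{A}_2$ are free w.r.t. $\tau$ and whenever $a_n\in\mathcal{A}_{i_n},\dots,a_1\in\mathcal{A}_{i_1}$, $v\in V_h$, $b_1\in\mathcal{A}_{j_1},\dots,b_m\in\mathcal{A}_{j_m}$ with consecutive indices in $i_n,\dots,i_1,h,j_1,\dots,j_m$ all different and all $a_r,b_s$ centered for $\tau$, one has $\tau'(a_n\cdots a_1vb_1\cdots b_m)=\tau(a_nb_m)\cdots\tau(a_1b_1)\tau'(v)$ if $n=m$ and $i_r=j_r$ for all $r$, and $0$ otherwise. Infinitesimal freeness w.r.t. $(\tau,\tau')$: whenever $a_j\in\mathcal{A}_{i_j}$ with consecutive indices different and $\tau(a_j)=0$ for all $j$, $\tau(a_1\cdots a_n)=0$ and $\tau'(a_1\cdots a_n)=\sum_{j=1}^n\tau(a_1\cdots a_{j-1}\tau'(a_j)a_{j+1}\cdots a_n)$. *)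

theory Defs
  imports Complex_Main
begin

text \<open>Generators: \<open>Inl i\<close> stands for X_(i+1), \<open>Inr j\<close> stands for Y_(j+1).
  A noncommutative polynomial is a finitely supported coefficient function on words.\<close>

type_synonym gen = "nat + nat"
type_synonym word = "gen list"
type_synonym ncp = "word \<Rightarrow> complex"

definition pzero :: ncp where "pzero = (\<lambda>w. 0)"
definition pone :: ncp where "pone = (\<lambda>w. if w = [] then 1 else 0)"
definition padd :: "ncp \<Rightarrow> ncp \<Rightarrow> ncp" where "padd p q = (\<lambda>w. p w + q w)"
definition psmult :: "complex \<Rightarrow> ncp \<Rightarrow> ncp" where "psmult c p = (\<lambda>w. c * p w)"

text \<open>Product in the free algebra: concatenation of words, extended bilinearly.\<close>
definition pmul :: "ncp \<Rightarrow> ncp \<Rightarrow> ncp" where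
  "pmul p q = (\<lambda>w. \<Sum>i\<le>length w. p (take i w) * q (drop i w))"

definition pprod :: "ncp list \<Rightarrow> ncp" where
  "pprod xs = foldr pmul xs pone"

text \<open>The unital subalgebra \<open>\<complex>\<langle>S\<rangle>\<close> generated by a set of generators S.\<close>
definition polys :: "gen set \<Rightarrow> ncp set" where
  "polys S = {p. finite {w. p w \<noteq> 0} \<and> (\<forall>w. p w \<noteq> 0 \<longrightarrow> set w \<subseteq> S)}"

definition is_ideal :: "ncp set \<Rightarrow> ncp set \<Rightarrow> bool" where
  "is_ideal B J \<longleftrightarrow> J \<subseteq> B \<and> pzero \<in> J \<and> (\<forall>p\<in>J. \<forall>q\<in>J. padd p q \<in> J) \<and>
     (\<forall>c. \<forall>p\<in>J. psmult c p \<in> J) \<and>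
     (\<forall>a\<in>B. \<forall>p\<in>J. pmul a p \<in> J \<and> pmul p a \<in> J)"

definition gen_ideal :: "ncp set \<Rightarrow> ncp set \<Rightarrow> ncp set" where
  "gen_ideal B S = \<Inter> {J. S \<subseteq> J \<and> is_ideal B J}"

definition var :: "gen \<Rightarrow> ncp" where
  "var g = (\<lambda>w. if w = [g] then 1 else 0)"

text \<open>A linear functional on the free algebra is determined by its values on words
  (its moments) t; \<open>lin t\<close> is its linear extension.\<close>
definition lin :: "(word \<Rightarrow> complex) \<Rightarrow> ncp \<Rightarrow> complex" where
  "lin t p = (\<Sum>w\<in>{w. p w \<noteq> 0}. p w * t w)"

definition alternating :: "'i list \<Rightarrow> bool" where
  "alternating idx \<longleftrightarrow> (\<forall>j. Suc j < length idx \<longrightarrow> idx ! j \<noteq> idx ! Suc j)"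

definition free_wrt :: "(ncp \<Rightarrow> complex) \<Rightarrow> ('i \<Rightarrow> ncp set) \<Rightarrow> 'i set \<Rightarrow> bool" where
  "free_wrt tau Alg Ix \<longleftrightarrow>
    (\<forall>as idx. as \<noteq> [] \<and> length idx = length as \<and> set idx \<subseteq> Ix \<and> alternating idx \<and>
       (\<forall>j<length as. as ! j \<in> Alg (idx ! j) \<and> tau (as ! j) = 0)
       \<longrightarrow> tau (pprod as) = 0)"

text \<open>The lists \<open>as = [a_1,...,a_n]\<close>
  with indices \<open>ia = [i_1,...,i_n]\<close> and \<open>bs = [b_1,...,b_m]\<close> with indices
  \<open>ib = [j_1,...,j_m]\<close>; the product is \<open>a_n \<cdots> a_1 v b_1 \<cdots> b_m\<close>.\<close>
definition free_typeB ::
  "(ncp \<Rightarrow> complex) \<Rightarrow> (ncp \<Rightarrow> complex) \<Rightarrow> ('i \<Rightarrow> ncp set) \<Rightarrow> ('i \<Rightarrow> ncp set) \<Rightarrow> 'i set \<Rightarrow> bool" where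
  "free_typeB tau tau' Alg V Ix \<longleftrightarrow> free_wrt tau Alg Ix \<and>
    (\<forall>as ia bs ib h v.
       length ia = length as \<and> length ib = length bs \<and> set ia \<subseteq> Ix \<and> set ib \<subseteq> Ix \<and>
       h \<in> Ix \<and> v \<in> V h \<and> alternating (rev ia @ [h] @ ib) \<and>
       (\<forall>r<length as. as ! r \<in> Alg (ia ! r) \<and> tau (as ! r) = 0) \<and>
       (\<forall>s<length bs. bs ! s \<in> Alg (ib ! s) \<and> tau (bs ! s) = 0)
       \<longrightarrow> tau' (pmul (pprod (rev as)) (pmul v (pprod bs))) =
           (if length as = length bs \<and> ia = ib
            then (\<Prod>r<length as. tau (pmul (as ! r) (bs ! r))) * tau' v
            else 0))"

definition inf_free :: "(ncp \<Rightarrow> complex) \<Rightarrow> (ncp \<Rightarrow> complex) \<Rightarrow> ('i \<Rightarrow> ncp set) \<Rightarrow> 'i set \<Rightarrow> bool" where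
  "inf_free tau tau' Alg Ix \<longleftrightarrow>
    (\<forall>as idx. as \<noteq> [] \<and> length idx = length as \<and> set idx \<subseteq> Ix \<and> alternating idx \<and>
       (\<forall>j<length as. as ! j \<in> Alg (idx ! j) \<and> tau (as ! j) = 0)
       \<longrightarrow> tau (pprod as) = 0 \<and>
           tau' (pprod as) =
             (\<Sum>j<length as. tau (pprod (as[j := psmult (tau' (as ! j)) pone]))))"

end

theory Submission
  imports Defs
begin

text \<open>Split each centred \<open>a\<^sub>j\<close> as \<open>p\<^sub>j + q\<^sub>j\<close>, where \<open>p\<^sub>j\<close> is a polynomial in the
  generators outside the ideal (so \<open>\<tau>' p\<^sub>j = 0\<close>) and \<open>q\<^sub>j \<in> \<I>\<close> (so \<open>\<tau> q\<^sub>j = 0\<close>); both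
  parts are again centred. The defect
  \<open>\<tau>'(a\<^sub>1\<cdots>a\<^sub>n) - \<Sum>\<^sub>j \<tau>'(a\<^sub>j) \<tau>(a\<^sub>1\<cdots>1\<cdots>a\<^sub>n)\<close> is multilinear, so it suffices that
  it vanishes when every entry is a \<open>p\<^sub>j\<close> or a \<open>q\<^sub>j\<close>. If all entries lie in the kernel
  algebra of \<open>\<tau>'\<close>, every term is zero. Otherwise cut the word at an entry \<open>v \<in> \<I>\<close>:
  freeness of type B evaluates \<open>\<tau>'\<close> of the word as \<open>\<Prod>\<^sub>r \<tau>(a\<^sub>r b\<^sub>r) \<tau>'(v)\<close>, and plain
  freeness evaluates \<open>\<tau>\<close> of the word with \<open>v\<close> removed by the same product. With no
  further entry in \<open>\<I>\<close> the two contributions cancel; with a further one, every product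
  in sight lies in \<open>\<I>\<close> and everything vanishes.\<close>

section \<open>Multiplication of noncommutative polynomials\<close>

definition splits :: "word \<Rightarrow> (word \<times> word) set" where
  "splits w = {(u, v). u @ v = w}"

lemma splits_eq_image: "splits w = (\<lambda>i. (take i w, drop i w)) ` {..length w}"
  unfolding splits_def
proof (intro set_eqI iffI)
  fix uv assume "uv \<in> {(u, v). u @ v = w}"
  then show "uv \<in> (\<lambda>i. (take i w, drop i w)) ` {..length w}"
    by (auto intro!: image_eqI[where x = "length (fst uv)"])
qed auto

lemma finite_splits [simp]: "finite (splits w)"
  by (simp add: splits_eq_image)

lemma pmul_eq_sum_splits: "pmul p q w = (\<Sum>(u, v)\<in>splits w. p u * q v)"
proof -
  have "inj_on (\<lambda>i. (take i w, drop i w)) {..length w}"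
    by (rule inj_onI) (metis atMost_iff length_take min.absorb2 prod.inject)
  then show ?thesis
    unfolding pmul_def splits_eq_image by (simp add: sum.reindex)
qed

lemma pmul_assoc: "pmul (pmul p q) r = pmul p (pmul q r)"
proof
  fix w :: word
  let ?T = "{(x, y, z). x @ y @ z = w}"
  have "pmul (pmul p q) r w = (\<Sum>((u, z), (x, y))\<in>(SIGMA uz:splits w. splits (fst uz)). p x * q y * r z)"
    by (simp add: pmul_eq_sum_splits sum_distrib_right sum.Sigma split_def)
  also have "\<dots> = (\<Sum>(x, y, z)\<in>?T. p x * q y * r z)"
    by (rule sum.reindex_bij_witness[where i = "\<lambda>(x, y, z). ((x @ y, z), (x, y))"
          and j = "\<lambda>((u, z), (x, y)). (x, y, z)"]) (auto simp: splits_def)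
  also have "\<dots> = (\<Sum>((x, u), (y, z))\<in>(SIGMA xu:splits w. splits (snd xu)). p x * (q y * r z))"
    by (rule sum.reindex_bij_witness[where i = "\<lambda>((x, u), (y, z)). (x, y, z)"
          and j = "\<lambda>(x, y, z). ((x, y @ z), (y, z))"]) (auto simp: splits_def)
  also have "\<dots> = pmul p (pmul q r) w"
    by (simp add: pmul_eq_sum_splits sum_distrib_left sum.Sigma split_def)
  finally show "pmul (pmul p q) r w = pmul p (pmul q r) w" .
qed

lemma pmul_padd_left: "pmul (padd p q) r = padd (pmul p r) (pmul q r)"
  by (simp add: pmul_def padd_def fun_eq_iff distrib_right sum.distrib)

lemma pmul_padd_right: "pmul r (padd p q) = padd (pmul r p) (pmul r q)"
  by (simp add: pmul_def padd_def fun_eq_iff distrib_left sum.distrib)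

lemma pmul_psmult_left: "pmul (psmult c p) r = psmult c (pmul p r)"
  by (simp add: pmul_def psmult_def fun_eq_iff sum_distrib_left mult.assoc)

lemma pmul_psmult_right: "pmul r (psmult c p) = psmult c (pmul r p)"
  by (simp add: pmul_def psmult_def fun_eq_iff sum_distrib_left mult.left_commute)

lemma pmul_pone_left [simp]: "pmul pone p = p"
proof
  fix w
  have "pmul pone p w = (\<Sum>uv\<in>splits w. if uv = ([], w) then p w else 0)"
    unfolding pmul_eq_sum_splits by (rule sum.cong) (auto simp: pone_def splits_def split: if_splits)
  then show "pmul pone p w = p w"
    using finite_splits[of w] by (simp add: splits_def)
qed

lemma pprod_Nil [simp]: "pprod [] = pone"
  and pprod_Cons [simp]: "pprod (x # xs) = pmul x (pprod xs)"
  by (simp_all add: pprod_def)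

lemma pprod_append: "pprod (xs @ ys) = pmul (pprod xs) (pprod ys)"
  by (induction xs) (simp_all add: pmul_assoc)

lemma pprod_list_update_padd:
  "j < length xs \<Longrightarrow> pprod (xs[j := padd u v]) = padd (pprod (xs[j := u])) (pprod (xs[j := v]))"
  by (induction xs arbitrary: j) (auto split: nat.splits simp: pmul_padd_left pmul_padd_right)

lemma pprod_list_update_psmult:
  "j < length xs \<Longrightarrow> pprod (xs[j := psmult c u]) = psmult c (pprod (xs[j := u]))"
  by (induction xs arbitrary: j) (auto split: nat.splits simp: pmul_psmult_left pmul_psmult_right)

section \<open>Subalgebras, linear functionals and ideals\<close>

definition supp :: "ncp \<Rightarrow> word set" where
  "supp p = {w. p w \<noteq> 0}"

definition monomial :: "word \<Rightarrow> ncp" where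
  "monomial w = (\<lambda>x. if x = w then 1 else 0)"

definition subalgebra :: "ncp set \<Rightarrow> bool" where
  "subalgebra B \<longleftrightarrow> pone \<in> B \<and> (\<forall>p\<in>B. \<forall>q\<in>B. padd p q \<in> B \<and> pmul p q \<in> B) \<and>
     (\<forall>c. \<forall>p\<in>B. psmult c p \<in> B)"

definition linear_on :: "ncp set \<Rightarrow> (ncp \<Rightarrow> complex) \<Rightarrow> bool" where
  "linear_on B f \<longleftrightarrow> (\<forall>p\<in>B. \<forall>q\<in>B. f (padd p q) = f p + f q) \<and> (\<forall>c. \<forall>p\<in>B. f (psmult c p) = c * f p)"

lemma polys_iff: "p \<in> polys S \<longleftrightarrow> finite (supp p) \<and> (\<forall>w\<in>supp p. set w \<subseteq> S)"
  by (auto simp: polys_def supp_def)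

lemma polys_mono: "S \<subseteq> T \<Longrightarrow> polys S \<subseteq> polys T"
  by (force simp: polys_iff)

lemma monomial_polys: "set w \<subseteq> S \<Longrightarrow> monomial w \<in> polys S"
  by (simp add: polys_iff supp_def monomial_def)

lemma pone_eq_monomial: "pone = monomial []"
  and var_eq_monomial: "var g = monomial [g]"
  by (simp_all add: pone_def var_def monomial_def fun_eq_iff)

lemma monomial_append: "monomial (u @ v) = pmul (monomial u) (monomial v)"
proof
  fix w
  have "pmul (monomial u) (monomial v) w = (\<Sum>uv\<in>splits w. if uv = (u, v) then 1 else 0)"
    unfolding pmul_eq_sum_splits by (rule sum.cong) (auto simp: monomial_def split: if_splits)
  then show "monomial (u @ v) w = pmul (monomial u) (monomial v) w"
    using finite_splits[of w] by (simp add: monomial_def splits_def)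
qed

lemma supp_pmul: "supp (pmul p q) \<subseteq> (\<lambda>(u, v). u @ v) ` (supp p \<times> supp q)"
proof
  fix w assume "w \<in> supp (pmul p q)"
  then have "(\<Sum>(u, v)\<in>splits w. p u * q v) \<noteq> 0"
    by (simp add: supp_def pmul_eq_sum_splits)
  then obtain uv where "uv \<in> splits w" "(case uv of (u, v) \<Rightarrow> p u * q v) \<noteq> 0"
    by (rule sum.not_neutral_contains_not_neutral)
  then show "w \<in> (\<lambda>(u, v). u @ v) ` (supp p \<times> supp q)"
    by (auto simp: splits_def supp_def split: prod.splits)
qed

lemma polys_supp_subset:
  assumes "supp r \<subseteq> supp p \<union> supp q" "p \<in> polys S" "q \<in> polys S"
  shows "r \<in> polys S"
proof -
  have "finite (supp r)"
    using finite_subset[OF assms(1)] assms(2,3) by (simp add: polys_iff)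
  then show ?thesis
    using assms by (auto simp: polys_iff)
qed

lemma subalgebra_polys: "subalgebra (polys S)"
proof -
  have "pmul p q \<in> polys S" if "p \<in> polys S" "q \<in> polys S" for p q
  proof -
    have "finite ((\<lambda>(u, v). u @ v) ` (supp p \<times> supp q))"
      using that by (simp add: polys_iff)
    then have "finite (supp (pmul p q))"
      by (rule finite_subset[OF supp_pmul])
    moreover have "set w \<subseteq> S" if w: "w \<in> supp (pmul p q)" for w
    proof -
      obtain u v where "w = u @ v" "u \<in> supp p" "v \<in> supp q"
        using subsetD[OF supp_pmul w] by auto
      then show ?thesis
        using \<open>p \<in> polys S\<close> \<open>q \<in> polys S\<close> by (simp add: polys_iff)
    qed
    ultimately show ?thesis
      by (simp add: polys_iff)
  qed
  moreover have "padd p q \<in> polys S" if "p \<in> polys S" "q \<in> polys S" for p q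
    by (rule polys_supp_subset[OF _ that]) (auto simp: supp_def padd_def)
  moreover have "psmult c p \<in> polys S" if "p \<in> polys S" for c p
    by (rule polys_supp_subset[OF _ that that]) (auto simp: supp_def psmult_def)
  ultimately show ?thesis
    by (simp add: subalgebra_def pone_eq_monomial monomial_polys)
qed

lemma lin_eq_sum_superset: "finite W \<Longrightarrow> supp p \<subseteq> W \<Longrightarrow> lin t p = (\<Sum>w\<in>W. p w * t w)"
  unfolding lin_def by (rule sum.mono_neutral_left) (auto simp: supp_def)

lemma lin_pone: "lin t pone = t []"
  using lin_eq_sum_superset[of "{[]}" pone t] by (simp add: supp_def pone_def)

lemma linear_on_lin_polys: "linear_on (polys S) (lin t)"
proof -
  have "lin t (padd p q) = lin t p + lin t q" if "finite (supp p)" "finite (supp q)" for p q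
  proof -
    let ?W = "supp p \<union> supp q"
    have "lin t (padd p q) = (\<Sum>w\<in>?W. padd p q w * t w)"
      by (rule lin_eq_sum_superset) (use that in \<open>auto simp: supp_def padd_def\<close>)
    also have "\<dots> = (\<Sum>w\<in>?W. p w * t w) + (\<Sum>w\<in>?W. q w * t w)"
      by (simp add: padd_def distrib_right sum.distrib)
    also have "\<dots> = lin t p + lin t q"
      using that lin_eq_sum_superset[of ?W p t] lin_eq_sum_superset[of ?W q t] by simp
    finally show ?thesis .
  qed
  moreover have "lin t (psmult c p) = c * lin t p" if "finite (supp p)" for c p
  proof -
    have "lin t (psmult c p) = (\<Sum>w\<in>supp p. psmult c p w * t w)"
      by (rule lin_eq_sum_superset) (use that in \<open>auto simp: supp_def psmult_def\<close>)
    then show ?thesis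
      using that by (simp add: psmult_def lin_eq_sum_superset sum_distrib_left mult.assoc)
  qed
  ultimately show ?thesis
    by (simp add: linear_on_def polys_iff)
qed

lemma subalgebra_closed:
  assumes "subalgebra B" "p \<in> B" "q \<in> B"
  shows subalgebra_padd: "padd p q \<in> B" and subalgebra_pmul: "pmul p q \<in> B"
    and subalgebra_psmult: "psmult c p \<in> B"
  using assms by (simp_all add: subalgebra_def)

lemma subalgebra_pone: "subalgebra B \<Longrightarrow> pone \<in> B"
  by (simp add: subalgebra_def)

lemma subalgebra_pprod: "subalgebra B \<Longrightarrow> set xs \<subseteq> B \<Longrightarrow> pprod xs \<in> B"
  by (induction xs) (simp_all add: subalgebra_pone subalgebra_pmul)

lemma linear_on_padd: "linear_on B f \<Longrightarrow> p \<in> B \<Longrightarrow> q \<in> B \<Longrightarrow> f (padd p q) = f p + f q"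
  and linear_on_psmult: "linear_on B f \<Longrightarrow> p \<in> B \<Longrightarrow> f (psmult c p) = c * f p"
  by (simp_all add: linear_on_def)

lemma linear_on_pprod_list_update_padd:
  assumes "linear_on B f" "subalgebra B" "set xs \<subseteq> B" "j < length xs" "u \<in> B" "v \<in> B"
  shows "f (pprod (xs[j := padd u v])) = f (pprod (xs[j := u])) + f (pprod (xs[j := v]))"
proof -
  have "set (xs[j := w]) \<subseteq> B" if "w \<in> B" for w
    using assms(3) that set_update_subset_insert[of xs j w] by blast
  then show ?thesis
    using assms by (simp add: pprod_list_update_padd linear_on_padd subalgebra_pprod)
qed

lemma is_ideal_pmul:
  assumes "is_ideal B J" "a \<in> B" "p \<in> J"
  shows is_ideal_pmul_left: "pmul a p \<in> J" and is_ideal_pmul_right: "pmul p a \<in> J"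
  using assms by (simp_all add: is_ideal_def)

lemma pprod_mem_ideal:
  assumes "is_ideal B J" "subalgebra B" "set xs \<subseteq> B" "x \<in> set xs" "x \<in> J"
  shows "pprod xs \<in> J"
  using assms(3,4)
proof (induction xs)
  case (Cons y xs)
  show ?case
  proof (cases "x \<in> set xs")
    case True
    then show ?thesis
      using Cons assms(1) by (simp add: is_ideal_pmul_left)
  next
    case False
    then show ?thesis
      using Cons assms by (simp add: is_ideal_pmul_right subalgebra_pprod)
  qed
qed simp

lemma subset_gen_ideal: "S \<subseteq> gen_ideal B S"
  by (auto simp: gen_ideal_def)

lemma is_ideal_gen_ideal:
  assumes "subalgebra B" "S \<subseteq> B"
  shows "is_ideal B (gen_ideal B S)"
proof -
  have "pzero = psmult 0 pone"
    by (simp add: pzero_def psmult_def)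
  then have "pzero \<in> B"
    using assms(1) unfolding subalgebra_def by metis
  then have "is_ideal B B"
    using assms(1) by (simp add: is_ideal_def subalgebra_def)
  then have "gen_ideal B S \<subseteq> B"
    using assms(2) by (auto simp: gen_ideal_def)
  moreover have mem: "x \<in> gen_ideal B S \<longleftrightarrow> (\<forall>J. S \<subseteq> J \<and> is_ideal B J \<longrightarrow> x \<in> J)" for x
    by (auto simp: gen_ideal_def)
  ultimately show ?thesis
    unfolding is_ideal_def by (simp add: mem is_ideal_def)
qed

lemma gen_ideal_subset: "subalgebra B \<Longrightarrow> S \<subseteq> B \<Longrightarrow> gen_ideal B S \<subseteq> B"
  using is_ideal_gen_ideal by (simp add: is_ideal_def)

lemma monomial_mem_ideal:
  assumes J: "is_ideal (polys G) J" and "var g \<in> J" "set w \<subseteq> G" "g \<in> set w"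
  shows "monomial w \<in> J"
proof -
  obtain u v where w: "w = u @ g # v"
    using \<open>g \<in> set w\<close> split_list by metis
  then have "monomial w = pmul (monomial u) (pmul (var g) (monomial v))"
    by (simp add: var_eq_monomial flip: monomial_append)
  moreover have "monomial u \<in> polys G" "monomial v \<in> polys G"
    using \<open>set w \<subseteq> G\<close> w by (auto intro!: monomial_polys)
  ultimately show ?thesis
    using J \<open>var g \<in> J\<close> unfolding is_ideal_def by metis
qed

lemma mem_ideal_if_words_meet:
  assumes J: "is_ideal (polys G) J" and H: "var ` H \<subseteq> J"
    and "q \<in> polys G" and "\<forall>w\<in>supp q. set w \<inter> H \<noteq> {}"
  shows "q \<in> J"
proof -
  have "finite (supp q)"
    using \<open>q \<in> polys G\<close> by (simp add: polys_iff)
  then show ?thesis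
    using assms(3,4)
  proof (induction "supp q" arbitrary: q rule: finite_induct)
    case empty
    then have "q = pzero"
      by (auto simp: supp_def pzero_def)
    then show ?case
      using J by (simp add: is_ideal_def)
  next
    case (insert w W)
    define q' where "q' = q(w := 0)"
    have supp_q': "supp q' = W"
      using insert.hyps by (auto simp: q'_def supp_def)
    have "q' \<in> J"
    proof (rule insert.hyps(3))
      show "q' \<in> polys G" "\<forall>w\<in>supp q'. set w \<inter> H \<noteq> {}"
        using insert.prems insert.hyps(1,4) supp_q' by (auto simp: polys_iff)
    qed (use supp_q' in simp)
    moreover have "monomial w \<in> J"
    proof -
      have "set w \<subseteq> G" "set w \<inter> H \<noteq> {}"
        using insert.prems insert.hyps(4) by (auto simp: polys_iff)
      then show ?thesis
        using monomial_mem_ideal[OF J] H by blast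
    qed
    moreover have "q = padd q' (psmult (q w) (monomial w))"
      by (auto simp: q'_def padd_def psmult_def monomial_def)
    ultimately show ?case
      using J unfolding is_ideal_def by metis
  qed
qed

lemma polys_split_gen_ideal:
  assumes a: "a \<in> polys G" and "H \<subseteq> G"
  shows "\<exists>p q. a = padd p q \<and> p \<in> polys (G - H) \<and> q \<in> gen_ideal (polys G) (var ` H)"
proof -
  define p where "p = (\<lambda>w. if set w \<inter> H = {} then a w else 0)"
  define q where "q = (\<lambda>w. if set w \<inter> H = {} then 0 else a w)"
  have "supp p \<subseteq> supp a" "supp q \<subseteq> supp a"
    by (auto simp: p_def q_def supp_def)
  then have "finite (supp p)" "finite (supp q)"
    using a finite_subset by (auto simp: polys_iff)
  moreover have "\<forall>w\<in>supp p. set w \<subseteq> G - H" "\<forall>w\<in>supp q. set w \<subseteq> G"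
    using a by (auto simp: polys_iff supp_def p_def q_def split: if_splits)
  ultimately have p: "p \<in> polys (G - H)" and q: "q \<in> polys G"
    by (simp_all add: polys_iff)
  have "q \<in> J" if "var ` H \<subseteq> J" "is_ideal (polys G) J" for J
    using mem_ideal_if_words_meet[OF that(2,1) q] by (simp add: supp_def q_def)
  then have "q \<in> gen_ideal (polys G) (var ` H)"
    by (simp add: gen_ideal_def)
  moreover have "a = padd p q"
    by (simp add: p_def q_def padd_def fun_eq_iff)
  ultimately show ?thesis
    using p by blast
qed

lemma polys_split_subalgebra_ideal:
  assumes a: "a \<in> polys G" and "H \<subseteq> G" "G - H \<subseteq> S" "gen_ideal (polys G) (var ` H) \<subseteq> J"
  shows "\<exists>p q. a = padd p q \<and> p \<in> polys G \<inter> polys S \<and> q \<in> polys G \<inter> J"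
proof -
  obtain p q where "a = padd p q" "p \<in> polys (G - H)" "q \<in> gen_ideal (polys G) (var ` H)"
    using polys_split_gen_ideal[OF assms(1,2)] by blast
  moreover have "polys (G - H) \<subseteq> polys G \<inter> polys S"
    using assms(3) polys_mono by (meson Diff_subset le_inf_iff)
  moreover have "var ` H \<subseteq> polys G"
    using \<open>H \<subseteq> G\<close> by (auto simp: var_eq_monomial intro!: monomial_polys)
  then have "gen_ideal (polys G) (var ` H) \<subseteq> polys G \<inter> J"
    using gen_ideal_subset[OF subalgebra_polys] assms(4) by blast
  ultimately show ?thesis
    by blast
qed

section \<open>Alternating index words and multilinearity\<close>

lemma alternating_eq_distinct_adj: "alternating = distinct_adj"
  by (simp add: fun_eq_iff alternating_def distinct_adj_conv_nth)

lemma distinct_adj_two_valued_collapse: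
  assumes "distinct_adj (rev ys @ y # h # z # zs)" "{y, h, z} \<subseteq> {a, b}"
  shows "y = z \<and> distinct_adj (rev ys @ y # zs)"
proof -
  have "y \<noteq> h" "h \<noteq> z"
    using assms(1) by (auto simp: distinct_adj_append_iff distinct_adj_Cons)
  then have "y = z"
    using assms(2) by auto
  with assms(1) show ?thesis
    by (auto simp: distinct_adj_append_iff distinct_adj_Cons)
qed

lemma distinct_adj_two_valued_mirror:
  "length ys = length zs \<Longrightarrow> distinct_adj (rev ys @ h # zs) \<Longrightarrow> set (rev ys @ h # zs) \<subseteq> {a, b} \<Longrightarrow>
    ys = zs"
proof (induction ys zs arbitrary: h rule: list_induct2)
  case (Cons y ys z zs)
  then have "y = z \<and> distinct_adj (rev ys @ y # zs)"
    by (intro distinct_adj_two_valued_collapse[of ys y h z zs a b]) auto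
  with Cons show ?case
    by auto
qed simp

lemma multilinear_vanishes:
  fixes F :: "'a list \<Rightarrow> 'b::comm_monoid_add"
  assumes add_closed: "\<And>u v. u \<in> D \<Longrightarrow> v \<in> D \<Longrightarrow> add u v \<in> D"
    and F_add: "\<And>xs j u v. set xs \<subseteq> D \<Longrightarrow> j < length xs \<Longrightarrow> u \<in> D \<Longrightarrow> v \<in> D \<Longrightarrow>
      F (xs[j := add u v]) = F (xs[j := u]) + F (xs[j := v])"
    and PQ: "\<And>j. j < n \<Longrightarrow> P j \<in> D \<and> Q j \<in> D"
    and F_pure: "\<And>xs. length xs = n \<Longrightarrow> \<forall>j<n. xs ! j = P j \<or> xs ! j = Q j \<Longrightarrow> F xs = 0"
  shows "F (map (\<lambda>j. add (P j) (Q j)) [0..<n]) = 0"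
proof -
  have "F xs = 0"
    if "length xs = n" "\<forall>j<n. if j < k then xs ! j = add (P j) (Q j) else xs ! j = P j \<or> xs ! j = Q j"
    for k xs
    using that
  proof (induction k arbitrary: xs)
    case 0
    then show ?case
      using F_pure by simp
  next
    case (Suc k)
    show ?case
    proof (cases "k < n")
      case False
      then show ?thesis
        using Suc.prems by (intro Suc.IH) auto
    next
      case True
      have "xs ! j \<in> D" if "j < n" for j
        using Suc.prems(2)[rule_format, OF that] PQ[OF that] add_closed by (auto split: if_splits)
      then have "set xs \<subseteq> D"
        using Suc.prems(1) by (auto simp: in_set_conv_nth)
      moreover have "xs ! k = add (P k) (Q k)"
        using Suc.prems(2) True by auto
      then have "xs[k := add (P k) (Q k)] = xs"
        by (metis list_update_id)
      moreover have "F (xs[k := P k]) = 0" "F (xs[k := Q k]) = 0"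
        using Suc.prems True by (auto intro!: Suc.IH simp: nth_list_update)
      ultimately show ?thesis
        using F_add[of xs k "P k" "Q k"] PQ[OF True] True Suc.prems(1) by (metis add.right_neutral)
    qed
  qed
  from this[of _ n] show ?thesis
    by simp
qed

text \<open>In the application \<open>K\<close> is the subalgebra generated by the generators outside the
  ideal, \<open>X\<^sub>i\<close> for \<open>i > k'\<close> and \<open>Y\<^sub>j\<close> for \<open>j > \<ell>'\<close>.\<close>

locale typeB_decomposition =
  fixes tau tau' :: "ncp \<Rightarrow> complex" and A I K :: "ncp set" and Alg :: "nat \<Rightarrow> ncp set"
  assumes subalgebra_A: "subalgebra A"
    and subalgebra_Alg: "i \<in> {1, 2} \<Longrightarrow> subalgebra (Alg i)"
    and Alg_subset: "i \<in> {1, 2} \<Longrightarrow> Alg i \<subseteq> A"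
    and linear_tau: "linear_on A tau" and linear_tau': "linear_on A tau'"
    and tau_pone: "tau pone = 1"
    and ideal_I: "is_ideal A I" and tau_I: "p \<in> I \<Longrightarrow> tau p = 0"
    and K_subset: "K \<subseteq> A" and subalgebra_K: "subalgebra K" and tau'_K: "p \<in> K \<Longrightarrow> tau' p = 0"
    and typeB: "free_typeB tau tau' Alg (\<lambda>i. I \<inter> Alg i) {1, 2}"
    and Alg_split: "i \<in> {1, 2} \<Longrightarrow> a \<in> Alg i \<Longrightarrow> \<exists>p q. a = padd p q \<and> p \<in> Alg i \<inter> K \<and> q \<in> Alg i \<inter> I"
begin

definition centered :: "ncp \<Rightarrow> nat \<Rightarrow> bool" where
  "centered x i \<longleftrightarrow> i \<in> {1, 2} \<and> x \<in> Alg i \<and> tau x = 0"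

lemma I_subset: "I \<subseteq> A"
  using ideal_I by (simp add: is_ideal_def)

lemma centered_in_A: "centered x i \<Longrightarrow> x \<in> A"
  using Alg_subset by (auto simp: centered_def)

lemma centered_subset_A: "list_all2 centered xs idx \<Longrightarrow> set xs \<subseteq> A"
  by (induction rule: list_all2_induct) (auto dest: centered_in_A)

lemma centered_indices: "list_all2 centered xs idx \<Longrightarrow> set idx \<subseteq> {1, 2}"
  by (induction rule: list_all2_induct) (auto simp: centered_def)

lemma tau_pprod_alternating:
  assumes "xs \<noteq> []" "list_all2 centered xs idx" "distinct_adj idx"
  shows "tau (pprod xs) = 0"
proof -
  have "free_wrt tau Alg {1, 2}"
    using typeB by (simp add: free_typeB_def)
  moreover have "length idx = length xs" "\<forall>j<length xs. xs ! j \<in> Alg (idx ! j) \<and> tau (xs ! j) = 0"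
    using assms(2) by (auto simp: list_all2_conv_all_nth centered_def)
  ultimately show ?thesis
    using assms(1,3) centered_indices[OF assms(2)]
    unfolding free_wrt_def alternating_eq_distinct_adj by blast
qed

lemma centered_recenter:
  assumes i: "i \<in> {1, 2}" and c: "c \<in> Alg i"
  shows "centered (padd c (psmult (- tau c) pone)) i"
proof -
  have "c \<in> A" "pone \<in> A" "psmult (- tau c) pone \<in> A"
    using c Alg_subset[OF i] subalgebra_A by (auto simp: subalgebra_psmult subalgebra_pone)
  then have "tau (padd c (psmult (- tau c) pone)) = 0"
    using linear_tau tau_pone by (simp add: linear_on_padd linear_on_psmult)
  moreover have "padd c (psmult (- tau c) pone) \<in> Alg i"
    using c subalgebra_Alg[OF i] by (simp add: subalgebra_padd subalgebra_psmult subalgebra_pone)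
  ultimately show ?thesis
    using i by (simp add: centered_def)
qed

lemma tau_recenter:
  assumes "X \<in> A" "Y \<in> A" "c \<in> A"
  shows "tau (pmul X (pmul c Y)) =
    tau (pmul X (pmul (padd c (psmult (- tau c) pone)) Y)) + tau c * tau (pmul X Y)"
proof -
  have "pmul X (pmul (padd c (psmult (- tau c) pone)) Y) =
      padd (pmul X (pmul c Y)) (psmult (- tau c) (pmul X Y))"
    by (simp add: pmul_padd_left pmul_padd_right pmul_psmult_left pmul_psmult_right)
  moreover have "pmul X (pmul c Y) \<in> A" "pmul X Y \<in> A"
    using assms subalgebra_A by (simp_all add: subalgebra_pmul)
  ultimately show ?thesis
    using linear_tau subalgebra_A by (simp add: linear_on_padd linear_on_psmult subalgebra_psmult)
qed

text \<open>Induction from the middle of \<open>a\<^sub>n \<cdots> a\<^sub>1 b\<^sub>1 \<cdots> b\<^sub>m\<close>: as the indices alternate,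
  \<open>a\<^sub>1\<close> and \<open>b\<^sub>1\<close> lie in the same algebra, and writing \<open>a\<^sub>1 b\<^sub>1\<close> as its centred part plus
  \<open>\<tau>(a\<^sub>1 b\<^sub>1)\<close> splits the word into a centred alternating word and a shorter one.\<close>
lemma tau_pprod_rev_append:
  assumes "list_all2 centered as ia" "list_all2 centered bs ib" "h \<in> {1, 2}"
    and "distinct_adj (rev ia @ h # ib)"
  shows "tau (pprod (rev as @ bs)) =
    (if length as = length bs then \<Prod>r<length as. tau (pmul (as ! r) (bs ! r)) else 0)"
  using assms
proof (induction as ia arbitrary: bs ib h rule: list_all2_induct)
  case Nil
  show ?case
  proof (cases bs)
    case Nil
    then show ?thesis
      by (simp add: tau_pone)
  next
    case (Cons b bs')
    then show ?thesis
      using Nil.prems tau_pprod_alternating[of bs ib] by (auto simp: distinct_adj_Cons)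
  qed
next
  case (Cons a as i ia)
  show ?case
  proof (cases bs)
    case Nil
    have "list_all2 centered (rev (a # as)) (rev (i # ia))"
      using Cons.hyps by (simp add: list_all2_appendI)
    moreover have "distinct_adj (rev (i # ia))"
      using Cons.prems(3) by (auto simp del: rev.simps(2))
    ultimately show ?thesis
      using Nil tau_pprod_alternating[of "rev (a # as)"] by simp
  next
    case (Cons b bs')
    then obtain j ib' where ib: "ib = j # ib'" "centered b j" "list_all2 centered bs' ib'"
      using \<open>list_all2 centered bs ib\<close> by (auto simp: list_all2_Cons1)
    have "i = j \<and> distinct_adj (rev ia @ i # ib')"
      using \<open>distinct_adj (rev (i # ia) @ h # ib)\<close> \<open>h \<in> {1, 2}\<close> \<open>centered a i\<close> ib
      by (intro distinct_adj_two_valued_collapse[where a = 1 and b = 2]) (auto simp: centered_def)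
    then have "i = j" and alt: "distinct_adj (rev ia @ i # ib')"
      by auto
    define X where "X = pprod (rev as)"
    define Y where "Y = pprod bs'"
    define c where "c = pmul a b"
    have i: "i \<in> {1, 2}" and "c \<in> Alg i"
      using \<open>centered a i\<close> ib(2) \<open>i = j\<close> subalgebra_Alg
      by (auto simp: centered_def c_def subalgebra_pmul)
    have "X \<in> A" "Y \<in> A" "c \<in> A"
      using centered_subset_A[OF Cons.hyps(2)] centered_subset_A[OF ib(3)] \<open>c \<in> Alg i\<close> Alg_subset[OF i]
      by (auto simp: X_def Y_def intro!: subalgebra_pprod[OF subalgebra_A])
    have "tau (pmul X (pmul (padd c (psmult (- tau c) pone)) Y)) = 0"
      using tau_pprod_alternating[of "rev as @ padd c (psmult (- tau c) pone) # bs'" "rev ia @ i # ib'"]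
        Cons.hyps(2) ib(3) centered_recenter[OF i \<open>c \<in> Alg i\<close>] alt
      by (simp add: X_def Y_def pprod_append list_all2_appendI)
    moreover have "tau (pmul X Y) =
        (if length as = length bs' then \<Prod>r<length as. tau (pmul (as ! r) (bs' ! r)) else 0)"
      using Cons.IH[OF ib(3) i alt] by (simp add: X_def Y_def pprod_append)
    moreover have "pprod (rev (a # as) @ bs) = pmul X (pmul c Y)"
      by (simp add: Cons X_def Y_def c_def pprod_append pmul_assoc)
    ultimately show ?thesis
      using tau_recenter[OF \<open>X \<in> A\<close> \<open>Y \<in> A\<close> \<open>c \<in> A\<close>] Cons
      by (simp add: c_def prod.lessThan_Suc_shift del: prod.lessThan_Suc)
  qed
qed

lemma tau'_pprod_typeB:
  assumes as: "list_all2 centered as ia" and bs: "list_all2 centered bs ib"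
    and v: "centered v h" "v \<in> I" and alt: "distinct_adj (rev ia @ h # ib)"
  shows "tau' (pprod (rev as @ v # bs)) =
    (if length as = length bs then (\<Prod>r<length as. tau (pmul (as ! r) (bs ! r))) * tau' v else 0)"
proof -
  have len: "length ia = length as" "length ib = length bs"
    using as bs by (simp_all add: list_all2_lengthD)
  have "length as = length bs \<Longrightarrow> ia = ib"
    using distinct_adj_two_valued_mirror[OF _ alt, of 1 2] len v(1)
      centered_indices[OF as] centered_indices[OF bs] by (auto simp: centered_def)
  moreover have "tau' (pmul (pprod (rev as)) (pmul v (pprod bs))) =
      (if length as = length bs \<and> ia = ib
       then (\<Prod>r<length as. tau (pmul (as ! r) (bs ! r))) * tau' v else 0)"
    by (rule typeB[unfolded free_typeB_def, THEN conjunct2, rule_format])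
      (use len as bs v alt centered_indices[OF as] centered_indices[OF bs] in
        \<open>auto simp: alternating_eq_distinct_adj list_all2_conv_all_nth centered_def\<close>)
  ultimately show ?thesis
    by (simp add: pprod_append)
qed

definition inf_defect :: "ncp list \<Rightarrow> complex" where
  "inf_defect xs = tau' (pprod xs) - (\<Sum>j<length xs. tau' (xs ! j) * tau (pprod (xs[j := pone])))"

lemma inf_defect_list_update_padd:
  assumes xs: "set xs \<subseteq> A" and m: "m < length xs" and u: "u \<in> A" and v: "v \<in> A"
  shows "inf_defect (xs[m := padd u v]) = inf_defect (xs[m := u]) + inf_defect (xs[m := v])"
proof -
  have "tau' (xs[m := padd u v] ! j) * tau (pprod ((xs[m := padd u v])[j := pone])) =
      tau' (xs[m := u] ! j) * tau (pprod ((xs[m := u])[j := pone])) +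
      tau' (xs[m := v] ! j) * tau (pprod ((xs[m := v])[j := pone]))" if j: "j < length xs" for j
  proof (cases "j = m")
    case True
    then show ?thesis
      using linear_on_padd[OF linear_tau' u v] m by (simp add: distrib_right)
  next
    case False
    then have "(xs[m := w])[j := pone] = (xs[j := pone])[m := w]" for w
      by (simp add: list_update_swap)
    moreover have "set (xs[j := pone]) \<subseteq> A"
      using xs set_update_subset_insert[of xs j pone] subalgebra_pone[OF subalgebra_A] by blast
    ultimately show ?thesis
      using False m linear_on_pprod_list_update_padd[OF linear_tau subalgebra_A _ _ u v, of "xs[j := pone]" m]
      by (simp add: distrib_left)
  qed
  then show ?thesis
    using linear_on_pprod_list_update_padd[OF linear_tau' subalgebra_A xs m u v]
    by (simp add: inf_defect_def sum.distrib)
qed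

lemma inf_defect_K: "set xs \<subseteq> K \<Longrightarrow> inf_defect xs = 0"
  using tau'_K subalgebra_pprod[OF subalgebra_K] by (simp add: inf_defect_def subset_iff)

lemma inf_defect_single_I:
  assumes as: "list_all2 centered as ia" and bs: "list_all2 centered bs ib"
    and v: "centered v h" "v \<in> I" and alt: "distinct_adj (rev ia @ h # ib)"
    and K: "set as \<union> set bs \<subseteq> K"
  shows "inf_defect (rev as @ v # bs) = 0"
proof -
  let ?xs = "rev as @ v # bs"
  have "tau' (?xs ! j) = 0" if "j < length ?xs" "j \<noteq> length as" for j
  proof -
    have "?xs ! j \<in> set as \<union> set bs"
      using that by (auto simp: nth_append nth_Cons' rev_nth)
    then show ?thesis
      using K tau'_K by blast
  qed
  then have "(\<Sum>j<length ?xs. tau' (?xs ! j) * tau (pprod (?xs[j := pone]))) =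
      tau' v * tau (pprod (rev as @ bs))"
    by (subst sum.remove[of _ "length as"])
      (auto simp: nth_append list_update_append pprod_append intro!: sum.neutral)
  moreover have "h \<in> {1, 2}"
    using v(1) by (simp add: centered_def)
  ultimately show ?thesis
    using tau_pprod_rev_append[OF as bs _ alt] tau'_pprod_typeB[OF as bs v alt]
    by (simp add: inf_defect_def)
qed

lemma inf_defect_several_I:
  assumes as: "list_all2 centered as ia" and bs: "list_all2 centered bs ib"
    and v: "centered v h" "v \<in> I" and alt: "distinct_adj (rev ia @ h # ib)"
    and x: "x \<in> set as \<union> set bs" "x \<in> I"
  shows "inf_defect (rev as @ v # bs) = 0"
proof -
  let ?xs = "rev as @ v # bs"
  have xs_A: "set ?xs \<subseteq> A"
    using centered_subset_A[OF as] centered_subset_A[OF bs] v I_subset by auto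
  have "(\<Prod>r<length as. tau (pmul (as ! r) (bs ! r))) = 0" if len: "length as = length bs"
  proof -
    have "\<exists>r<length as. as ! r = x \<or> bs ! r = x"
      using x(1) len by (auto simp: in_set_conv_nth)
    then obtain r where r: "r < length as" "as ! r = x \<or> bs ! r = x"
      by blast
    have "as ! r \<in> A" "bs ! r \<in> A"
      using nth_mem[OF r(1)] nth_mem[of r bs] r(1) len xs_A by auto
    then have "pmul (as ! r) (bs ! r) \<in> I"
      using r(2) x(2) is_ideal_pmul_left[OF ideal_I] is_ideal_pmul_right[OF ideal_I] by auto
    then show ?thesis
      using r(1) tau_I by (intro prod_zero) auto
  qed
  then have "tau' (pprod ?xs) = 0"
    using tau'_pprod_typeB[OF as bs v alt] by simp
  moreover have "tau (pprod (?xs[j := pone])) = 0" if j: "j < length ?xs" for j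
  proof -
    have "set (?xs[j := pone]) \<subseteq> A"
      using xs_A set_update_subset_insert[of ?xs j pone] subalgebra_pone[OF subalgebra_A] by blast
    moreover obtain y where "y \<in> set (?xs[j := pone])" "y \<in> I"
    proof (cases "j = length as")
      case True
      then show ?thesis
        using that x by (auto simp: list_update_append)
    next
      case False
      have "length as < length (?xs[j := pone])"
        by simp
      then have "?xs[j := pone] ! length as \<in> set (?xs[j := pone])"
        by (rule nth_mem)
      moreover have "?xs[j := pone] ! length as = v"
        using False by (simp add: nth_append)
      ultimately show ?thesis
        using that v(2) by auto
    qed
    ultimately show ?thesis
      using pprod_mem_ideal[OF ideal_I subalgebra_A] tau_I by blast
  qed
  ultimately show ?thesis
    by (simp add: inf_defect_def)
qed

lemma inf_defect_vanishes:
  assumes xs: "list_all2 centered xs idx" and alt: "distinct_adj idx" and KI: "set xs \<subseteq> K \<union> I"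
  shows "inf_defect xs = 0"
proof (cases "set xs \<subseteq> K")
  case True
  then show ?thesis
    by (rule inf_defect_K)
next
  case False
  then obtain j where j: "j < length xs" "xs ! j \<in> I"
    using KI by (auto simp: in_set_conv_nth subset_iff)
  have len: "length idx = length xs"
    using xs by (simp add: list_all2_lengthD)
  define as bs ia ib
    where "as = rev (take j xs)" "bs = drop (Suc j) xs" "ia = rev (take j idx)" "ib = drop (Suc j) idx"
  have xs_eq: "xs = rev as @ xs ! j # bs" and idx_eq: "idx = rev ia @ idx ! j # ib"
    using id_take_nth_drop[of j xs] id_take_nth_drop[of j idx] j len by (simp_all add: as_bs_ia_ib_def)
  have as: "list_all2 centered as ia" and bs: "list_all2 centered bs ib"
    and v: "centered (xs ! j) (idx ! j)"
    using xs j by (auto simp: as_bs_ia_ib_def list_all2_takeI list_all2_dropI list_all2_nthD)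
  have alt': "distinct_adj (rev ia @ idx ! j # ib)"
    using alt idx_eq by simp
  have "set as \<union> set bs \<subseteq> K \<union> I"
    using KI by (auto simp: as_bs_ia_ib_def dest: in_set_takeD in_set_dropD)
  then consider "set as \<union> set bs \<subseteq> K" | x where "x \<in> set as \<union> set bs" "x \<in> I"
    by blast
  then show ?thesis
  proof cases
    case 1
    then show ?thesis
      using inf_defect_single_I[OF as bs v j(2) alt'] xs_eq by metis
  next
    case 2
    then show ?thesis
      using inf_defect_several_I[OF as bs v j(2) alt'] xs_eq by metis
  qed
qed


lemma inf_defect_alternating:
  assumes centered: "list_all2 centered as idx" and alt: "distinct_adj idx"
  shows "inf_defect as = 0"
proof -
  let ?n = "length as"
  have "\<forall>j<?n. \<exists>p q. as ! j = padd p q \<and> p \<in> Alg (idx ! j) \<inter> K \<and> q \<in> Alg (idx ! j) \<inter> I"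
    using centered Alg_split by (auto simp: list_all2_conv_all_nth centered_def)
  then obtain P Q where PQ: "\<And>j. j < ?n \<Longrightarrow>
      as ! j = padd (P j) (Q j) \<and> P j \<in> Alg (idx ! j) \<inter> K \<and> Q j \<in> Alg (idx ! j) \<inter> I"
    by metis
  have PQ_centered: "centered (P j) (idx ! j) \<and> centered (Q j) (idx ! j)" if j: "j < ?n" for j
  proof -
    have "centered (as ! j) (idx ! j)"
      using centered j by (simp add: list_all2_conv_all_nth)
    moreover have "P j \<in> A" "Q j \<in> A" "tau (Q j) = 0"
      using PQ[OF j] K_subset I_subset tau_I by auto
    ultimately show ?thesis
      using PQ[OF j] linear_on_padd[OF linear_tau] by (auto simp: centered_def)
  qed
  have "as = map (\<lambda>j. padd (P j) (Q j)) [0..<?n]"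
    using PQ by (intro nth_equalityI) auto
  also have "inf_defect \<dots> = 0"
  proof (rule multilinear_vanishes[where D = A and add = padd and P = P and Q = Q])
    show "P j \<in> A \<and> Q j \<in> A" if "j < ?n" for j
      using PQ[OF that] K_subset I_subset by auto
  next
    fix xs assume xs: "length xs = ?n" "\<forall>j<?n. xs ! j = P j \<or> xs ! j = Q j"
    then have "list_all2 centered xs idx"
      using PQ_centered list_all2_lengthD[OF centered] by (auto simp: list_all2_conv_all_nth)
    moreover have "xs ! j \<in> K \<union> I" if "j < ?n" for j
      using xs(2) PQ[OF that] that by auto
    then have "set xs \<subseteq> K \<union> I"
      using xs(1) by (metis in_set_conv_nth subsetI)
    ultimately show "inf_defect xs = 0"
      by (rule inf_defect_vanishes[OF _ alt])
  qed (simp_all add: subalgebra_padd[OF subalgebra_A] inf_defect_list_update_padd)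
  finally show ?thesis .
qed

theorem inf_free: "inf_free tau tau' Alg {1, 2}"
  unfolding inf_free_def
proof (intro allI impI, elim conjE)
  fix as idx
  assume "as \<noteq> []" "length idx = length as" "set idx \<subseteq> {1, 2}" "alternating idx"
    and "\<forall>j<length as. as ! j \<in> Alg (idx ! j) \<and> tau (as ! j) = 0"
  moreover have "idx ! j \<in> {1, 2}" if "j < length as" for j
    using that \<open>length idx = length as\<close> \<open>set idx \<subseteq> {1, 2}\<close> nth_mem by (metis subsetD)
  ultimately have centered: "list_all2 centered as idx" and alt: "distinct_adj idx"
    by (simp_all add: list_all2_conv_all_nth centered_def alternating_eq_distinct_adj)
  have "tau (pprod (as[j := psmult (tau' (as ! j)) pone])) = tau' (as ! j) * tau (pprod (as[j := pone]))"
    if "j < length as" for j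
  proof -
    have "set (as[j := pone]) \<subseteq> A"
      using centered_subset_A[OF centered] set_update_subset_insert[of as j pone]
        subalgebra_pone[OF subalgebra_A] by blast
    then show ?thesis
      using that linear_on_psmult[OF linear_tau] subalgebra_pprod[OF subalgebra_A]
      by (simp add: pprod_list_update_psmult)
  qed
  then show "tau (pprod as) = 0 \<and>
      tau' (pprod as) = (\<Sum>j<length as. tau (pprod (as[j := psmult (tau' (as ! j)) pone])))"
    using tau_pprod_alternating[OF \<open>as \<noteq> []\<close> centered alt] inf_defect_alternating[OF centered alt]
    by (simp add: inf_defect_def)
qed

end

theorem lemma3p7:
  fixes k k' l l' :: nat and t t' :: "word \<Rightarrow> complex"
    and A A1 A2 I1 I2 I :: "ncp set"
  assumes "k' \<le> k" and "l' \<le> l"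
    and "A = polys (Inl ` {..<k} \<union> Inr ` {..<l})"
    and "A1 = polys (Inl ` {..<k})"
    and "A2 = polys (Inr ` {..<l})"
    and "I1 = gen_ideal A1 (var ` Inl ` {..<k'})"
    and "I2 = gen_ideal A2 (var ` Inr ` {..<l'})"
    and "I = gen_ideal A (I1 \<union> I2)"
    and "t [] = 1"
    and "t' [] = 0"
    and "\<forall>p\<in>I. lin t p = 0"
    and "\<forall>p\<in>polys (Inl ` {k'..<k} \<union> Inr ` {l'..<l}). lin t' p = 0"
    and "free_typeB (lin t) (lin t') (\<lambda>i::nat. if i = 1 then A1 else A2)
           (\<lambda>i. if i = 1 then I \<inter> A1 else I \<inter> A2) {1, 2}"
  shows "inf_free (lin t) (lin t') (\<lambda>i::nat. if i = 1 then A1 else A2) {1, 2}"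
proof -
  define K where "K = polys (Inl ` {k'..<k} \<union> Inr ` {l'..<l})"
  have A12: "A1 \<subseteq> A" "A2 \<subseteq> A" and K_A: "K \<subseteq> A"
    using assms(3-5) by (auto simp: K_def intro!: polys_mono)
  have "var ` Inl ` {..<k'} \<subseteq> A1" "var ` Inr ` {..<l'} \<subseteq> A2"
    using assms(1,2,4,5) by (auto simp: var_eq_monomial intro!: monomial_polys)
  then have "I1 \<subseteq> A1" "I2 \<subseteq> A2"
    using assms(4-7) gen_ideal_subset[OF subalgebra_polys] by simp_all
  then have "I1 \<union> I2 \<subseteq> A"
    using A12 by blast
  then have ideal_I: "is_ideal A I" and I12: "I1 \<union> I2 \<subseteq> I"
    using assms(3,8) is_ideal_gen_ideal[OF subalgebra_polys] subset_gen_ideal by simp_all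
  have gens: "Inl ` {..<k'} \<subseteq> Inl ` {..<k}" "Inl ` {..<k} - Inl ` {..<k'} \<subseteq> Inl ` {k'..<k} \<union> Inr ` {l'..<l}"
    "Inr ` {..<l'} \<subseteq> Inr ` {..<l}" "Inr ` {..<l} - Inr ` {..<l'} \<subseteq> Inl ` {k'..<k} \<union> Inr ` {l'..<l}"
    using assms(1,2) by (auto simp: image_iff)
  have split1: "\<exists>p q. a = padd p q \<and> p \<in> A1 \<inter> K \<and> q \<in> A1 \<inter> I" if "a \<in> A1" for a
    using polys_split_subalgebra_ideal[of a "Inl ` {..<k}" "Inl ` {..<k'}"] that gens assms(4,6) I12
    unfolding K_def by auto
  have split2: "\<exists>p q. a = padd p q \<and> p \<in> A2 \<inter> K \<and> q \<in> A2 \<inter> I" if "a \<in> A2" for a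
    using polys_split_subalgebra_ideal[of a "Inr ` {..<l}" "Inr ` {..<l'}"] that gens assms(5,7) I12
    unfolding K_def by auto
  interpret typeB_decomposition "lin t" "lin t'" A I K "\<lambda>i. if i = 1 then A1 else A2"
    using assms(3-5,9,11-13) A12 K_A ideal_I split1 split2
    by unfold_locales
      (auto simp: K_def subalgebra_polys linear_on_lin_polys lin_pone if_distrib[of "(\<inter>) I"])
  show ?thesis
    by (rule inf_free)
qed

end
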